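(* Let $X(t)=\sum_{k=1}^{N(t)}X_k$ be a compound Poisson process with rate $\lambda>0$ and iid symmetric jumps $X_k$, and $S_k=X_1+\dots+X_k$. Then for all $u>0$, $$P\Big(\sup_{0\le t\le1}X(t)>u\Big)\le2P(X(1)>u)-D(u),$$ where $$D(u)=e^{-\lambda}\Big[\lambda P(X_1>u)+\sum_{n=2}^\infty\frac{\lambda^n}{n!}P\Big(\max_{1\le k\le n-1}S_k\le u,\ S_n>u\Big)\Big].$$ *)

theory Defs
  imports "HOL-Probability.Probability"
begin

definition partial_sum :: "(nat \<Rightarrow> 'a \<Rightarrow> real) \<Rightarrow> nat \<Rightarrow> 'a \<Rightarrow> real" where
  "partial_sum X k \<omega> = (\<Sum>i=1..k. X i \<omega>)"

definition arrival :: "(nat \<Rightarrow> 'a \<Rightarrow> real) \<Rightarrow> nat \<Rightarrow> 'a \<Rightarrow> real" where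
  "arrival T n \<omega> = (\<Sum>i=1..n. T i \<omega>)"

text \<open>Counting process N(t) = number of arrivals in [0,t]; with iid Exp(lambda)
  inter-arrival times this is a Poisson process of rate lambda.\<close>
definition counting :: "(nat \<Rightarrow> 'a \<Rightarrow> real) \<Rightarrow> real \<Rightarrow> 'a \<Rightarrow> nat" where
  "counting T t \<omega> = card {n. 1 \<le> n \<and> arrival T n \<omega> \<le> t}"

definition compound :: "(nat \<Rightarrow> 'a \<Rightarrow> real) \<Rightarrow> (nat \<Rightarrow> 'a \<Rightarrow> real) \<Rightarrow> real \<Rightarrow> 'a \<Rightarrow> real" where
  "compound T X t \<omega> = partial_sum X (counting T t \<omega>) \<omega>"

end

theory Submission
  imports Defs
begin

(* Proof idea (a reflection principle for the compound Poisson process).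
   Let N = N(1) and let hits_by n be the event that one of the walk values
   S_1, ..., S_n exceeds u.  Almost surely X has finitely many jumps in [0,1], so the
   supremum of X on [0,1] exceeds u only if the walk exceeds u at one of the first N
   steps.  The event {N = n} is independent of the jumps and has probability
   pois n = e^{-l} l^n / n!, so by total probability
       P(sup X > u) <= sum_n pois n * P(hits_by n),  P(X(1) > u) = sum_n pois n * P(S_n > u).
   For fixed n, splitting hits_by n by the first passage time k of the walk over u and
   reflecting the increment S_n - S_k (symmetric, and independent of the passage event)
   gives the discrete reflection inequality
       P(hits_by n) <= 2 P(S_n > u) - P(first passage at time n),
   and the Poisson mixture of the first-passage probabilities is exactly D(u). *)

section \<open>General facts on independence and symmetry\<close>

text \<open>A coordinate projection on a product of Borel spaces is measurable, even for
  coordinates outside the index set (where all functions take the value undefined).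
  This lets the measurability prover handle predicates on finite blocks of variables.\<close>
lemma measurable_coordinate_PiM_borel [measurable]:
  "(\<lambda>f. f i) \<in> measurable (PiM A (\<lambda>_. borel)) (borel :: 'b::topological_space measure)"
proof (cases "i \<in> A")
  case True
  then show ?thesis by (rule measurable_component_singleton)
next
  case False
  have undef: "\<And>w. w \<in> space (PiM A (\<lambda>_. borel::'b measure)) \<Longrightarrow> w i = undefined"
    using False unfolding space_PiM by (rule_tac PiE_arb) auto
  show ?thesis unfolding measurable_def
  proof (intro CollectI conjI ballI)
    fix y :: "'b set"
    have "(\<lambda>f. f i) -` y \<inter> space (PiM A (\<lambda>_. borel::'b measure))
        = (if undefined \<in> y then space (PiM A (\<lambda>_. borel::'b measure)) else {})"
      using undef by (auto; metis)
    then show "(\<lambda>f. f i) -` y \<inter> space (PiM A (\<lambda>_. borel::'b measure))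
        \<in> sets (PiM A (\<lambda>_. borel::'b measure))" by simp
  qed auto
qed

lemma (in prob_space) block_event_sets:
  assumes Z: "\<And>i. i \<in> B \<Longrightarrow> Z i \<in> borel_measurable M"
    and Q: "{f\<in>space (PiM B (\<lambda>_. borel)). Q f} \<in> sets (PiM B (\<lambda>_. borel))"
  shows "{\<omega>\<in>space M. Q (restrict (\<lambda>i. Z i \<omega>) B)} \<in> sets M"
proof -
  have V: "(\<lambda>\<omega>. restrict (\<lambda>i. Z i \<omega>) B) \<in> measurable M (PiM B (\<lambda>_. borel))"
    by (rule measurable_restrict) (rule Z)
  have "{\<omega>\<in>space M. Q (restrict (\<lambda>i. Z i \<omega>) B)}
      = (\<lambda>\<omega>. restrict (\<lambda>i. Z i \<omega>) B) -` {f\<in>space (PiM B (\<lambda>_. borel)). Q f} \<inter> space M"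
    using measurable_space[OF V] by blast
  also have "\<dots> \<in> sets M" by (rule measurable_sets[OF V Q])
  finally show ?thesis .
qed

lemma (in prob_space) indep_blocks_prob:
  fixes Z :: "'i \<Rightarrow> 'a \<Rightarrow> real"
  assumes indep: "indep_vars (\<lambda>_. borel) Z I"
    and AB: "A \<inter> B = {}" "A \<subseteq> I" "B \<subseteq> I"
    and P: "{f\<in>space (PiM A (\<lambda>_. borel)). P f} \<in> sets (PiM A (\<lambda>_. borel))"
    and Q: "{f\<in>space (PiM B (\<lambda>_. borel)). Q f} \<in> sets (PiM B (\<lambda>_. borel))"
  shows "prob {\<omega>\<in>space M. P (restrict (\<lambda>i. Z i \<omega>) A) \<and> Q (restrict (\<lambda>i. Z i \<omega>) B)}
       = prob {\<omega>\<in>space M. P (restrict (\<lambda>i. Z i \<omega>) A)} * prob {\<omega>\<in>space M. Q (restrict (\<lambda>i. Z i \<omega>) B)}"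
proof -
  define VA where "VA \<omega> = restrict (\<lambda>i. Z i \<omega>) A" for \<omega>
  define VB where "VB \<omega> = restrict (\<lambda>i. Z i \<omega>) B" for \<omega>
  have Z: "\<And>i. i \<in> I \<Longrightarrow> Z i \<in> borel_measurable M"
    using indep unfolding indep_vars_def by auto
  have ind: "indep_var (PiM A (\<lambda>_. borel)) VA (PiM B (\<lambda>_. borel)) VB"
    unfolding VA_def VB_def by (rule indep_var_restrict[OF indep AB])
  have sA: "\<And>\<omega>. \<omega> \<in> space M \<Longrightarrow> VA \<omega> \<in> space (PiM A (\<lambda>_. borel))"
    unfolding VA_def using AB Z by (intro measurable_space[OF measurable_restrict]) auto
  have sB: "\<And>\<omega>. \<omega> \<in> space M \<Longrightarrow> VB \<omega> \<in> space (PiM B (\<lambda>_. borel))"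
    unfolding VB_def using AB Z by (intro measurable_space[OF measurable_restrict]) auto
  have "prob ((\<lambda>\<omega>. (VA \<omega>, VB \<omega>)) -` ({f\<in>space (PiM A (\<lambda>_. borel)). P f}
                                   \<times> {f\<in>space (PiM B (\<lambda>_. borel)). Q f}) \<inter> space M)
      = prob (VA -` {f\<in>space (PiM A (\<lambda>_. borel)). P f} \<inter> space M)
        * prob (VB -` {f\<in>space (PiM B (\<lambda>_. borel)). Q f} \<inter> space M)"
    by (rule indep_varD[OF ind P Q])
  moreover have "(\<lambda>\<omega>. (VA \<omega>, VB \<omega>)) -` ({f\<in>space (PiM A (\<lambda>_. borel)). P f}
                                   \<times> {f\<in>space (PiM B (\<lambda>_. borel)). Q f}) \<inter> space M
      = {\<omega>\<in>space M. P (VA \<omega>) \<and> Q (VB \<omega>)}"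
    using sA sB by blast
  moreover have "VA -` {f\<in>space (PiM A (\<lambda>_. borel)). P f} \<inter> space M = {\<omega>\<in>space M. P (VA \<omega>)}"
    using sA by blast
  moreover have "VB -` {f\<in>space (PiM B (\<lambda>_. borel)). Q f} \<inter> space M = {\<omega>\<in>space M. Q (VB \<omega>)}"
    using sB by blast
  ultimately show ?thesis by (simp add: VA_def VB_def)
qed

lemma (in prob_space) symmetric_sum_of_indep:
  fixes W Y :: "'a \<Rightarrow> real"
  assumes ind: "indep_var borel W borel Y"
    and W[measurable]: "W \<in> borel_measurable M" and Y[measurable]: "Y \<in> borel_measurable M"
    and symW: "distr M borel (\<lambda>\<omega>. - W \<omega>) = distr M borel W"
    and symY: "distr M borel (\<lambda>\<omega>. - Y \<omega>) = distr M borel Y"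
  shows "distr M borel (\<lambda>\<omega>. - (W \<omega> + Y \<omega>)) = distr M borel (\<lambda>\<omega>. W \<omega> + Y \<omega>)"
proof -
  have ind_neg: "indep_var borel (uminus \<circ> W) borel (uminus \<circ> Y)"
    by (rule indep_var_compose[OF ind]) auto
  have "distr M borel (\<lambda>\<omega>. - (W \<omega> + Y \<omega>))
      = distr (distr M (borel \<Otimes>\<^sub>M borel) (\<lambda>\<omega>. ((uminus \<circ> W) \<omega>, (uminus \<circ> Y) \<omega>))) borel (\<lambda>(a, b). a + b)"
    by (simp add: distr_distr comp_def)
  also have "\<dots> = distr (distr M borel (uminus \<circ> W) \<Otimes>\<^sub>M distr M borel (uminus \<circ> Y)) borel (\<lambda>(a, b). a + b)"
    using ind_neg unfolding indep_var_distribution_eq by simp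
  also have "\<dots> = distr (distr M borel W \<Otimes>\<^sub>M distr M borel Y) borel (\<lambda>(a, b). a + b)"
    using symW symY by (simp add: comp_def)
  also have "\<dots> = distr (distr M (borel \<Otimes>\<^sub>M borel) (\<lambda>\<omega>. (W \<omega>, Y \<omega>))) borel (\<lambda>(a, b). a + b)"
    using ind unfolding indep_var_distribution_eq by simp
  also have "\<dots> = distr M borel (\<lambda>\<omega>. W \<omega> + Y \<omega>)"
    by (simp add: distr_distr comp_def)
  finally show ?thesis .
qed

lemma (in prob_space) symmetric_prob_neg_eq_pos:
  fixes Y :: "'a \<Rightarrow> real"
  assumes Y[measurable]: "Y \<in> borel_measurable M"
    and sym: "distr M borel (\<lambda>\<omega>. - Y \<omega>) = distr M borel Y"
  shows "prob {\<omega>\<in>space M. Y \<omega> < 0} = prob {\<omega>\<in>space M. Y \<omega> > 0}"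
proof -
  have "prob {\<omega>\<in>space M. Y \<omega> > 0} = measure (distr M borel Y) {0<..}"
    by (subst measure_distr) (auto intro!: arg_cong[where f=prob])
  also have "\<dots> = measure (distr M borel (\<lambda>\<omega>. - Y \<omega>)) {0<..}"
    using sym by simp
  also have "\<dots> = prob {\<omega>\<in>space M. Y \<omega> < 0}"
    by (subst measure_distr) (auto intro!: arg_cong[where f=prob])
  finally show ?thesis by simp
qed

section \<open>The compound Poisson setting\<close>

locale compound_poisson = prob_space M for M :: "'a measure" +
  fixes T X :: "nat \<Rightarrow> 'a \<Rightarrow> real" and l u :: real
  assumes l_pos: "0 < l"
    and indep: "indep_vars (\<lambda>_. borel)
                  (\<lambda>i. case i of Inl n \<Rightarrow> T n | Inr n \<Rightarrow> X n) (Inl ` {1..} \<union> Inr ` {1..})"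
    and exp_T: "\<And>n. 1 \<le> n \<Longrightarrow> distributed M lborel (T n) (\<lambda>x. ennreal (exponential_density l x))"
    and X_rv: "\<And>n. 1 \<le> n \<Longrightarrow> X n \<in> borel_measurable M"
    and X_ident: "\<And>n. 1 \<le> n \<Longrightarrow> distr M borel (X n) = distr M borel (X 1)"
    and X_symm: "distr M borel (\<lambda>\<omega>. - X 1 \<omega>) = distr M borel (X 1)"
    and u_pos: "0 < u"
begin

abbreviation Z :: "nat + nat \<Rightarrow> 'a \<Rightarrow> real" where
  "Z \<equiv> (\<lambda>i. case i of Inl n \<Rightarrow> T n | Inr n \<Rightarrow> X n)"

abbreviation Idx :: "(nat + nat) set" where
  "Idx \<equiv> Inl ` {1..} \<union> Inr ` {1..}"

abbreviation V :: "(nat + nat) set \<Rightarrow> 'a \<Rightarrow> (nat + nat \<Rightarrow> real)" where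
  "V A \<omega> \<equiv> restrict (\<lambda>i. Z i \<omega>) A"

lemma Z_rv: "i \<in> Idx \<Longrightarrow> Z i \<in> borel_measurable M"
  using indep unfolding indep_vars_def by auto

lemma T_rv: "1 \<le> n \<Longrightarrow> T n \<in> borel_measurable M"
  using Z_rv[of "Inl n"] by auto

lemma partial_sum_measurable [measurable]: "partial_sum X k \<in> borel_measurable M"
  unfolding partial_sum_def[abs_def] by (rule borel_measurable_sum) (use X_rv in auto)

lemma arrival_measurable [measurable]: "arrival T k \<in> borel_measurable M"
  unfolding arrival_def[abs_def] by (rule borel_measurable_sum) (use T_rv in auto)

lemma partial_sum_0 [simp]: "partial_sum X 0 \<omega> = 0"
  by (simp add: partial_sum_def)

lemma sum_block_jumps: "{a..b} \<subseteq> J \<Longrightarrow> (\<Sum>i=a..b. V (Inr ` J) \<omega> (Inr i)) = (\<Sum>i=a..b. X i \<omega>)"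
  by (rule sum.cong) auto

lemma sum_block_times: "{a..b} \<subseteq> J \<Longrightarrow> (\<Sum>i=a..b. V (Inl ` J) \<omega> (Inl i)) = (\<Sum>i=a..b. T i \<omega>)"
  by (rule sum.cong) auto

lemma partial_sum_split:
  assumes "k \<le> n"
  shows "partial_sum X n \<omega> = partial_sum X k \<omega> + (\<Sum>i=k+1..n. X i \<omega>)"
proof -
  obtain p where n: "n = k + p" using assms le_Suc_ex by blast
  show ?thesis unfolding partial_sum_def n by (rule sum.ub_add_nat) simp
qed

section \<open>The reflection inequality for the symmetric random walk\<close>

lemma symmetric_jump_sum:
  assumes "finite J" "J \<subseteq> {1..}"
  shows "distr M borel (\<lambda>\<omega>. - (\<Sum>i\<in>J. X i \<omega>)) = distr M borel (\<lambda>\<omega>. \<Sum>i\<in>J. X i \<omega>)"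
  using assms
proof (induction J rule: finite_induct)
  case empty
  then show ?case by simp
next
  case (insert j J)
  have j: "1 \<le> j" using insert by auto
  have sum_rv: "(\<lambda>\<omega>. \<Sum>i\<in>J. X i \<omega>) \<in> borel_measurable M"
    by (rule borel_measurable_sum) (use X_rv insert in auto)
  have "indep_var borel (Z (Inr j)) borel (\<lambda>\<omega>. \<Sum>i\<in>Inr ` J. Z i \<omega>)"
    by (rule indep_vars_sum[OF _ _ indep_vars_subset[OF indep]]) (use insert in auto)
  then have ind: "indep_var borel (X j) borel (\<lambda>\<omega>. \<Sum>i\<in>J. X i \<omega>)"
    by (simp add: sum.reindex)
  have "distr M borel (\<lambda>\<omega>. - X j \<omega>) = distr (distr M borel (X j)) borel uminus"
    using X_rv[OF j] by (simp add: distr_distr comp_def)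
  also have "\<dots> = distr M borel (\<lambda>\<omega>. - X 1 \<omega>)"
    using X_ident[OF j] X_rv[of 1] by (simp add: distr_distr comp_def)
  finally have symX: "distr M borel (\<lambda>\<omega>. - X j \<omega>) = distr M borel (X j)"
    using X_symm X_ident[OF j] by simp
  have "distr M borel (\<lambda>\<omega>. - (X j \<omega> + (\<Sum>i\<in>J. X i \<omega>))) = distr M borel (\<lambda>\<omega>. X j \<omega> + (\<Sum>i\<in>J. X i \<omega>))"
    using insert by (intro symmetric_sum_of_indep[OF ind X_rv[OF j] sum_rv symX]) auto
  with insert show ?case by simp
qed

definition first_passage :: "nat \<Rightarrow> 'a set" where
  "first_passage k = {\<omega>\<in>space M. (\<forall>j\<in>{1..k-1}. partial_sum X j \<omega> \<le> u) \<and> partial_sum X k \<omega> > u}"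

definition hits_by :: "nat \<Rightarrow> 'a set" where
  "hits_by n = {\<omega>\<in>space M. \<exists>k\<in>{1..n}. partial_sum X k \<omega> > u}"

definition above_at :: "nat \<Rightarrow> 'a set" where
  "above_at n = {\<omega>\<in>space M. partial_sum X n \<omega> > u}"

lemma first_passage_sets [measurable]: "first_passage k \<in> sets M"
  unfolding first_passage_def by measurable

lemma hits_by_sets [measurable]: "hits_by k \<in> sets M"
  unfolding hits_by_def by measurable

lemma above_at_sets [measurable]: "above_at k \<in> sets M"
  unfolding above_at_def by measurable

lemma first_passage_0 [simp]: "first_passage 0 = {}"
  using u_pos by (simp add: first_passage_def)

lemma first_passage_disjoint: "disjoint_family first_passage"
proof -
  have "first_passage a \<inter> first_passage b = {}" if "a < b" for a b
  proof (cases "a = 0")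
    case False
    then have "a \<in> {1..b-1}" using that by auto
    then show ?thesis by (force simp: first_passage_def)
  qed simp
  then show ?thesis
    unfolding disjoint_family_on_def by (metis Int_commute linorder_neqE_nat)
qed

lemma hits_by_eq_first_passage: "hits_by n = (\<Union>k\<in>{1..n}. first_passage k)"
proof
  show "hits_by n \<subseteq> (\<Union>k\<in>{1..n}. first_passage k)"
  proof
    fix \<omega> assume "\<omega> \<in> hits_by n"
    then obtain k where k: "k \<in> {1..n}" "partial_sum X k \<omega> > u" and \<omega>: "\<omega> \<in> space M"
      by (auto simp: hits_by_def)
    define k0 where "k0 = (LEAST k. 1 \<le> k \<and> partial_sum X k \<omega> > u)"
    have k0: "1 \<le> k0 \<and> partial_sum X k0 \<omega> > u"
      unfolding k0_def by (rule LeastI[of _ k]) (use k in auto)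
    have k0_le: "k0 \<le> k"
      unfolding k0_def by (rule Least_le) (use k in auto)
    have "partial_sum X j \<omega> \<le> u" if j: "j \<in> {1..k0-1}" for j
    proof (rule ccontr)
      assume "\<not> partial_sum X j \<omega> \<le> u"
      then have "k0 \<le> j" unfolding k0_def by (intro Least_le) (use j in auto)
      then show False using j k0 by auto
    qed
    then have "\<omega> \<in> first_passage k0" using k0 \<omega> by (simp add: first_passage_def)
    then show "\<omega> \<in> (\<Union>k\<in>{1..n}. first_passage k)" using k0 k0_le k by auto
  qed
  show "(\<Union>k\<in>{1..n}. first_passage k) \<subseteq> hits_by n"
    by (auto simp: first_passage_def hits_by_def)
qed

text \<open>The first-passage event at time k depends on X 1, ..., X k only, hence is
  independent of the increment X (k+1) + ... + X n.\<close>
lemma first_passage_indep_increment: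
  assumes k: "1 \<le> k" "k < n" and B[measurable]: "B \<in> sets borel"
  shows "prob {\<omega>\<in>space M. \<omega> \<in> first_passage k \<and> (\<Sum>i=k+1..n. X i \<omega>) \<in> B}
       = prob (first_passage k) * prob {\<omega>\<in>space M. (\<Sum>i=k+1..n. X i \<omega>) \<in> B}"
proof -
  let ?A = "Inr ` {1..k} :: (nat + nat) set"
  let ?B = "Inr ` {k+1..n} :: (nat + nat) set"
  let ?P = "\<lambda>f. (\<forall>j\<in>{1..k-1}. (\<Sum>i=1..j. f (Inr i)) \<le> u) \<and> (\<Sum>i=1..k. f (Inr i)) > u"
  let ?Q = "\<lambda>f. (\<Sum>i=k+1..n. f (Inr i)) \<in> B"
  have P: "?P (V ?A \<omega>) \<longleftrightarrow> (\<forall>j\<in>{1..k-1}. partial_sum X j \<omega> \<le> u) \<and> partial_sum X k \<omega> > u" for \<omega>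
  proof -
    have eq: "(\<Sum>i=1..j. V ?A \<omega> (Inr i)) = partial_sum X j \<omega>" if "j \<le> k" for j
      using sum_block_jumps[of 1 j "{1..k}" \<omega>] that by (simp add: partial_sum_def)
    have "(\<forall>j\<in>{1..k-1}. (\<Sum>i=1..j. V ?A \<omega> (Inr i)) \<le> u) \<longleftrightarrow> (\<forall>j\<in>{1..k-1}. partial_sum X j \<omega> \<le> u)"
      by (rule ball_cong[OF refl], subst eq, auto)
    moreover have "(\<Sum>i=1..k. V ?A \<omega> (Inr i)) = partial_sum X k \<omega>" by (rule eq) simp
    ultimately show ?thesis by (simp only:)
  qed
  have Q: "?Q (V ?B \<omega>) \<longleftrightarrow> (\<Sum>i=k+1..n. X i \<omega>) \<in> B" for \<omega>
    using sum_block_jumps[of "k+1" n "{k+1..n}" \<omega>] by simp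
  have "prob {\<omega>\<in>space M. ?P (V ?A \<omega>) \<and> ?Q (V ?B \<omega>)}
      = prob {\<omega>\<in>space M. ?P (V ?A \<omega>)} * prob {\<omega>\<in>space M. ?Q (V ?B \<omega>)}"
    by (rule indep_blocks_prob[OF indep]) (use k in \<open>auto, measurable\<close>)
  then show ?thesis unfolding P Q first_passage_def by (simp add: conj_assoc)
qed

lemma first_passage_reflection:
  assumes k: "1 \<le> k" "k < n"
  shows "prob (first_passage k) \<le> 2 * prob (first_passage k \<inter> above_at n)"
proof -
  let ?R = "\<lambda>\<omega>. \<Sum>i=k+1..n. X i \<omega>"
  let ?F = "first_passage k"
  have R[measurable]: "?R \<in> borel_measurable M"
    by (rule borel_measurable_sum) (use X_rv k in auto)
  have "?F - above_at n \<subseteq> {\<omega>\<in>space M. \<omega> \<in> ?F \<and> ?R \<omega> \<in> {..<0}}"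
    using partial_sum_split[of k n] k by (auto simp: first_passage_def above_at_def)
  then have "prob (?F - above_at n) \<le> prob {\<omega>\<in>space M. \<omega> \<in> ?F \<and> ?R \<omega> \<in> {..<0}}"
    by (rule finite_measure_mono) measurable
  also have "\<dots> = prob ?F * prob {\<omega>\<in>space M. ?R \<omega> < 0}"
    using first_passage_indep_increment[OF k, of "{..<0}"] by simp
  also have "prob {\<omega>\<in>space M. ?R \<omega> < 0} = prob {\<omega>\<in>space M. ?R \<omega> > 0}"
    by (rule symmetric_prob_neg_eq_pos[OF R symmetric_jump_sum]) (use k in auto)
  also have "prob ?F * \<dots> = prob {\<omega>\<in>space M. \<omega> \<in> ?F \<and> ?R \<omega> \<in> {0<..}}"
    using first_passage_indep_increment[OF k, of "{0<..}"] by simp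
  also have "\<dots> \<le> prob (?F \<inter> above_at n)"
  proof (rule finite_measure_mono)
    show "{\<omega>\<in>space M. \<omega> \<in> ?F \<and> ?R \<omega> \<in> {0<..}} \<subseteq> ?F \<inter> above_at n"
      using partial_sum_split[of k n] k by (auto simp: first_passage_def above_at_def)
  qed measurable
  finally have "prob (?F - above_at n) \<le> prob (?F \<inter> above_at n)" .
  moreover have "prob ?F = prob (?F \<inter> above_at n) + prob (?F - above_at n)"
    by (subst finite_measure_Union[symmetric]) (auto intro!: arg_cong[where f=prob])
  ultimately show ?thesis by simp
qed

lemma walk_reflection_inequality:
  "prob (hits_by n) \<le> 2 * prob (above_at n) - prob (first_passage n)"
proof (cases "n = 0")
  case True
  then show ?thesis using u_pos by (simp add: hits_by_def above_at_def)
next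
  case False
  have split: "{1..n} = insert n {1..n-1}" "n \<notin> {1..n-1}" using False by auto
  have last: "first_passage n \<inter> above_at n = first_passage n"
    by (auto simp: first_passage_def above_at_def)
  have disj: "disjoint_family_on (\<lambda>k. first_passage k \<inter> above_at n) {1..n}"
    using first_passage_disjoint by (auto simp: disjoint_family_on_def)
  have "prob (hits_by n) = (\<Sum>k\<in>{1..n}. prob (first_passage k))"
    unfolding hits_by_eq_first_passage using first_passage_disjoint
    by (intro finite_measure_finite_Union) (auto simp: disjoint_family_on_def)
  also have "\<dots> = (\<Sum>k\<in>{1..n-1}. prob (first_passage k)) + prob (first_passage n)"
    unfolding split(1) using split(2) by simp
  also have "\<dots> \<le> (\<Sum>k\<in>{1..n-1}. 2 * prob (first_passage k \<inter> above_at n)) + prob (first_passage n)"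
    by (intro add_mono sum_mono first_passage_reflection) auto
  also have "\<dots> = 2 * (\<Sum>k\<in>{1..n}. prob (first_passage k \<inter> above_at n)) - prob (first_passage n)"
    unfolding split(1) using split(2) last by (simp add: sum_distrib_left)
  also have "(\<Sum>k\<in>{1..n}. prob (first_passage k \<inter> above_at n))
           = prob (\<Union>k\<in>{1..n}. first_passage k \<inter> above_at n)"
    by (rule finite_measure_finite_Union[symmetric]) (use disj in auto)
  also have "\<dots> \<le> prob (above_at n)"
    by (rule finite_measure_mono) auto
  finally show ?thesis by simp
qed

section \<open>The Poisson clock\<close>

definition pois :: "nat \<Rightarrow> real" where
  "pois n = exp (- l) * l ^ n / fact n"

lemma pois_nonneg: "0 \<le> pois n"
  using l_pos by (simp add: pois_def)

lemma pois_summable_mult: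
  assumes "\<And>n. 0 \<le> h n" "\<And>n. h n \<le> 1"
  shows "summable (\<lambda>n. pois n * h n)"
proof (rule summable_comparison_test')
  have "summable (\<lambda>n. exp (- l) * (inverse (fact n) * l ^ n))"
    by (intro summable_mult summable_exp)
  then show "summable pois"
    by (simp add: pois_def[abs_def] divide_inverse mult_ac)
  show "norm (pois n * h n) \<le> pois n" for n
    using mult_left_mono[OF assms(2) pois_nonneg, of n] assms(1)[of n] pois_nonneg[of n] by simp
qed

lemma arrival_erlang: "distributed M lborel (arrival T (Suc k)) (erlang_density k l)"
proof -
  have "distributed M lborel (\<lambda>x. \<Sum>i\<in>Inl ` {1..Suc k}. Z i x)
          (erlang_density (card (Inl ` {1..Suc k} :: (nat + nat) set) - 1) l)"
  proof (rule exponential_distributed_sum)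
    show "indep_vars (\<lambda>i. borel) Z (Inl ` {1..Suc k})"
      by (rule indep_vars_subset[OF indep]) auto
    show "distributed M lborel (Z i) (exponential_density l)" if "i \<in> Inl ` {1..Suc k}" for i
      using that exp_T by auto
  qed (use l_pos in auto)
  moreover have "(\<lambda>x. \<Sum>i\<in>Inl ` {1..Suc k}. Z i x) = arrival T (Suc k)"
    by (simp add: fun_eq_iff arrival_def sum.reindex)
  moreover have "card (Inl ` {1..Suc k} :: (nat + nat) set) = Suc k"
    by (simp add: card_image)
  ultimately show ?thesis by simp
qed

lemma prob_arrival_le_1: "prob {\<omega>\<in>space M. arrival T (Suc k) \<omega> \<le> 1} = erlang_CDF k l 1"
  using erlang_distributed_le[OF arrival_erlang l_pos] by simp

text \<open>The probability of at least k+1 arrivals in [0,1] tends to 0.\<close>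
lemma erlang_CDF_1_tendsto_0: "(\<lambda>k. erlang_CDF k l 1) \<longlonglongrightarrow> 0"
proof -
  have "(\<lambda>k. \<Sum>n<k. l^n / fact n) \<longlonglongrightarrow> exp l"
    using exp_converges[of l] by (simp add: sums_def divide_inverse mult.commute)
  then have "(\<lambda>k. 1 - (\<Sum>n<Suc k. l^n / fact n) * exp (- l)) \<longlonglongrightarrow> 1 - exp l * exp (- l)"
    by (intro tendsto_intros LIMSEQ_Suc)
  moreover have "erlang_CDF k l 1 = 1 - (\<Sum>n<Suc k. l^n / fact n) * exp (- l)" for k
    by (simp add: erlang_CDF_def lessThan_Suc_atMost sum_distrib_right)
  ultimately show ?thesis by (simp add: exp_minus)
qed

definition regular :: "'a \<Rightarrow> bool" where
  "regular \<omega> \<longleftrightarrow> (\<forall>i. 1 \<le> i \<longrightarrow> 0 < T i \<omega>) \<and> (\<exists>m. 1 \<le> m \<and> 1 < arrival T m \<omega>)"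

lemma AE_times_pos: "AE \<omega> in M. \<forall>i. 1 \<le> i \<longrightarrow> 0 < T i \<omega>"
proof (subst AE_all_countable, intro allI)
  fix i :: nat
  show "AE \<omega> in M. 1 \<le> i \<longrightarrow> 0 < T i \<omega>"
  proof (cases "1 \<le> i")
    case True
    have "prob {\<omega>\<in>space M. 0 < T i \<omega>} = 1"
      using exponential_distributedD_gt[OF exp_T[OF True] _ l_pos, of 0] by simp
    then have "AE \<omega> in M. \<omega> \<in> {\<omega>\<in>space M. 0 < T i \<omega>}" by (rule AE_prob_1)
    then show ?thesis by auto
  qed simp
qed

lemma AE_arrival_beyond_1: "AE \<omega> in M. \<exists>m. 1 \<le> m \<and> 1 < arrival T m \<omega>"
proof -
  define C where "C = {\<omega>\<in>space M. \<forall>m. 1 \<le> m \<longrightarrow> arrival T m \<omega> \<le> 1}"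
  have C[measurable]: "C \<in> sets M" unfolding C_def by measurable
  have "prob C \<le> erlang_CDF k l 1" for k
  proof -
    have "prob C \<le> prob {\<omega>\<in>space M. arrival T (Suc k) \<omega> \<le> 1}"
      by (rule finite_measure_mono) (auto simp: C_def)
    then show ?thesis by (simp add: prob_arrival_le_1)
  qed
  then have "prob C \<le> 0" using LIMSEQ_le_const[OF erlang_CDF_1_tendsto_0] by blast
  then have "C \<in> null_sets M"
    using measure_nonneg[of M C] by (simp add: null_sets_def emeasure_eq_measure)
  from AE_not_in[OF this] AE_space show ?thesis
    by eventually_elim (auto simp: C_def not_le)
qed

lemma AE_regular: "AE \<omega> in M. regular \<omega>"
  using AE_times_pos AE_arrival_beyond_1 by eventually_elim (simp add: regular_def)

lemma arrival_mono:
  assumes "regular \<omega>" and "i \<le> j"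
  shows "arrival T i \<omega> \<le> arrival T j \<omega>"
proof -
  obtain p where j: "j = i + p" using assms(2) le_Suc_ex by blast
  have "arrival T j \<omega> = arrival T i \<omega> + (\<Sum>k=i+1..j. T k \<omega>)"
    unfolding arrival_def j by (rule sum.ub_add_nat) simp
  moreover have "0 \<le> (\<Sum>k=i+1..j. T k \<omega>)"
    by (rule sum_nonneg) (use assms(1) in \<open>auto simp: regular_def less_imp_le\<close>)
  ultimately show ?thesis by simp
qed

lemma arrivals_in_unit_interval:
  assumes reg: "regular \<omega>"
  shows "{m. 1 \<le> m \<and> arrival T m \<omega> \<le> 1} = {1..counting T 1 \<omega>}"
proof -
  define K where "K = {m. 1 \<le> m \<and> arrival T m \<omega> \<le> 1}"
  obtain m0 where m0: "1 \<le> m0" "1 < arrival T m0 \<omega>" using reg by (auto simp: regular_def)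
  have "K \<subseteq> {1..<m0}"
  proof
    fix m assume m: "m \<in> K"
    have "\<not> m0 \<le> m"
      using m m0 arrival_mono[OF reg, of m0 m] by (auto simp: K_def)
    then show "m \<in> {1..<m0}" using m by (simp add: K_def)
  qed
  then have fin: "finite K" using finite_subset by blast
  have "K = {1..card K}"
  proof (cases "K = {}")
    case False
    have "K = {1..Max K}"
    proof
      show "K \<subseteq> {1..Max K}" using fin by (auto simp: K_def)
      show "{1..Max K} \<subseteq> K"
        using Max_in[OF fin False] arrival_mono[OF reg, of _ "Max K"] by (force simp: K_def)
    qed
    then show ?thesis by (metis card_atLeastAtMost diff_Suc_1)
  qed simp
  then show ?thesis by (simp add: K_def counting_def)
qed

lemma le_counting_iff:
  "regular \<omega> \<Longrightarrow> 1 \<le> k \<Longrightarrow> k \<le> counting T 1 \<omega> \<longleftrightarrow> arrival T k \<omega> \<le> 1"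
  using arrivals_in_unit_interval[of \<omega>] by (auto simp: set_eq_iff)

text \<open>An expression of N(t) = n through finitely many arrival indicators, from which
  the measurability of the events {N(t) = n} is read off.\<close>
lemma counting_eq_iff:
  "counting T t \<omega> = n \<longleftrightarrow>
    (\<exists>b. (\<forall>m. b < m \<longrightarrow> \<not> arrival T m \<omega> \<le> t) \<and>
         (\<Sum>m\<in>{1..b}. if arrival T m \<omega> \<le> t then 1 else 0 :: real) = real n) \<or>
    ((\<forall>b. \<exists>m. b < m \<and> arrival T m \<omega> \<le> t) \<and> n = 0)"
proof -
  define K where "K = {m. 1 \<le> m \<and> arrival T m \<omega> \<le> t}"
  have count: "counting T t \<omega> = card K" by (simp add: counting_def K_def)
  have card_sum: "(\<Sum>m\<in>{1..b}. if arrival T m \<omega> \<le> t then 1 else 0 :: real) = real (card K)"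
    if "\<forall>m. b < m \<longrightarrow> \<not> arrival T m \<omega> \<le> t" for b
  proof -
    have "K = {m\<in>{1..b}. arrival T m \<omega> \<le> t}" using that by (auto simp: K_def) (meson not_less)
    then show ?thesis by (simp add: sum.inter_filter[symmetric])
  qed
  show ?thesis
  proof (cases "finite K")
    case True
    then obtain b where b: "\<forall>m\<in>K. m < b" using finite_nat_bounded by blast
    have beyond: "\<forall>m. b < m \<longrightarrow> \<not> arrival T m \<omega> \<le> t"
    proof (intro allI impI notI)
      fix m assume "b < m" "arrival T m \<omega> \<le> t"
      then have "m \<in> K" by (simp add: K_def)
      with b \<open>b < m\<close> show False by auto
    qed
    then have "\<not> (\<forall>b. \<exists>m. b < m \<and> arrival T m \<omega> \<le> t)" by (meson less_trans lessI)
    then show ?thesis using card_sum beyond by (auto simp: count)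
  next
    case False
    then have "\<forall>b. \<exists>m. b < m \<and> arrival T m \<omega> \<le> t"
      unfolding infinite_nat_iff_unbounded K_def by auto
    then show ?thesis using False by (auto simp: count)
  qed
qed

lemma counting_eq_measurable [measurable]: "Measurable.pred M (\<lambda>\<omega>. counting T t \<omega> = n)"
  unfolding counting_eq_iff by measurable

lemma prob_n_arrivals:
  assumes n: "1 \<le> n"
  shows "prob {\<omega>\<in>space M. arrival T n \<omega> \<le> 1 \<and> \<not> arrival T (n+1) \<omega> \<le> 1} = pois n"
proof -
  obtain m where m: "n = Suc m" using n by (cases n) auto
  let ?A = "{\<omega>\<in>space M. arrival T n \<omega> \<le> 1}"
  let ?B = "{\<omega>\<in>space M. arrival T n \<omega> \<le> 1 \<and> arrival T (n+1) \<omega> \<le> 1}"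
  have "prob {\<omega>\<in>space M. arrival T n \<omega> \<le> 1 \<and> \<not> arrival T (n+1) \<omega> \<le> 1} = prob (?A - ?B)"
    by (rule arg_cong[where f=prob]) auto
  also have "\<dots> = prob ?A - prob ?B"
    by (rule finite_measure_Diff) auto
  also have "prob ?B = prob {\<omega>\<in>space M. arrival T (n+1) \<omega> \<le> 1}"
  proof (rule finite_measure_eq_AE)
    show "AE \<omega> in M. (\<omega> \<in> ?B) = (\<omega> \<in> {\<omega>\<in>space M. arrival T (n+1) \<omega> \<le> 1})"
      using AE_regular
    proof eventually_elim
      case (elim \<omega>)
      then show ?case using arrival_mono[OF elim, of n "n+1"] by auto
    qed
  qed measurable
  also have "prob ?A - prob {\<omega>\<in>space M. arrival T (n+1) \<omega> \<le> 1} = erlang_CDF m l 1 - erlang_CDF (Suc m) l 1"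
    using prob_arrival_le_1[of m] prob_arrival_le_1[of "Suc m"] m by simp
  also have "\<dots> = pois n"
    by (simp add: erlang_CDF_def pois_def m)
  finally show ?thesis .
qed

text \<open>The event {N(1) = n} is independent of the first n jumps: conditioning on it
  multiplies by the Poisson weight.\<close>
lemma prob_counting_and_jumps:
  assumes n: "1 \<le> n"
    and Q: "{f\<in>space (PiM (Inr ` {1..n}) (\<lambda>_. borel)). Q f} \<in> sets (PiM (Inr ` {1..n}) (\<lambda>_. borel))"
  shows "prob {\<omega>\<in>space M. counting T 1 \<omega> = n \<and> Q (V (Inr ` {1..n}) \<omega>)}
       = pois n * prob {\<omega>\<in>space M. Q (V (Inr ` {1..n}) \<omega>)}"
proof -
  let ?B = "Inr ` {1..n} :: (nat + nat) set"
  let ?A = "Inl ` {1..n+1} :: (nat + nat) set"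
  let ?P = "\<lambda>f. (\<Sum>i=1..n. f (Inl i)) \<le> (1::real) \<and> \<not> (\<Sum>i=1..n+1. f (Inl i)) \<le> 1"
  have QB: "{\<omega>\<in>space M. Q (V ?B \<omega>)} \<in> sets M"
    by (rule block_event_sets[OF _ Q]) (use X_rv in auto)
  have PA: "?P (V ?A \<omega>) \<longleftrightarrow> arrival T n \<omega> \<le> 1 \<and> \<not> arrival T (n+1) \<omega> \<le> 1" for \<omega>
    using sum_block_times[of 1 n "{1..n+1}" \<omega>] sum_block_times[of 1 "n+1" "{1..n+1}" \<omega>]
    by (simp add: arrival_def)
  have "prob {\<omega>\<in>space M. counting T 1 \<omega> = n \<and> Q (V ?B \<omega>)}
      = prob {\<omega>\<in>space M. ?P (V ?A \<omega>) \<and> Q (V ?B \<omega>)}"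
  proof (rule finite_measure_eq_AE)
    show "AE \<omega> in M. (\<omega> \<in> {\<omega>\<in>space M. counting T 1 \<omega> = n \<and> Q (V ?B \<omega>)})
                   = (\<omega> \<in> {\<omega>\<in>space M. ?P (V ?A \<omega>) \<and> Q (V ?B \<omega>)})"
      using AE_regular
    proof eventually_elim
      case (elim \<omega>)
      have "counting T 1 \<omega> = n \<longleftrightarrow> arrival T n \<omega> \<le> 1 \<and> \<not> arrival T (n+1) \<omega> \<le> 1"
        using le_counting_iff[OF elim, of n] le_counting_iff[OF elim, of "n+1"] n by auto
      then show ?case unfolding PA by auto
    qed
    show "{\<omega>\<in>space M. counting T 1 \<omega> = n \<and> Q (V ?B \<omega>)} \<in> sets M"
      using QB by (auto simp: Collect_conj_eq[symmetric])
    show "{\<omega>\<in>space M. ?P (V ?A \<omega>) \<and> Q (V ?B \<omega>)} \<in> sets M"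
      unfolding PA using QB by measurable
  qed
  also have "\<dots> = prob {\<omega>\<in>space M. ?P (V ?A \<omega>)} * prob {\<omega>\<in>space M. Q (V ?B \<omega>)}"
    by (rule indep_blocks_prob[OF indep]) (use Q in \<open>auto, measurable\<close>)
  also have "prob {\<omega>\<in>space M. ?P (V ?A \<omega>)} = pois n"
    unfolding PA using prob_n_arrivals[OF n] by simp
  finally show ?thesis .
qed

section \<open>Conditioning on the number of jumps in [0,1]\<close>

lemma prob_counting_and_above:
  "prob {\<omega>\<in>space M. counting T 1 \<omega> = n \<and> partial_sum X n \<omega> > u} = pois n * prob (above_at n)"
proof (cases "n = 0")
  case True
  then show ?thesis using u_pos by (simp add: above_at_def)
next
  case False
  let ?B = "Inr ` {1..n} :: (nat + nat) set"
  have sum_eq: "(\<Sum>i=1..n. V ?B \<omega> (Inr i)) = partial_sum X n \<omega>" for \<omega>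
    using sum_block_jumps[of 1 n "{1..n}" \<omega>] by (simp add: partial_sum_def)
  have "prob {\<omega>\<in>space M. counting T 1 \<omega> = n \<and> (\<Sum>i=1..n. V ?B \<omega> (Inr i)) > u}
      = pois n * prob {\<omega>\<in>space M. (\<Sum>i=1..n. V ?B \<omega> (Inr i)) > u}"
    using False by (intro prob_counting_and_jumps) measurable
  then show ?thesis unfolding sum_eq above_at_def .
qed

lemma prob_counting_and_hits:
  "prob {\<omega>\<in>space M. counting T 1 \<omega> = n \<and> (\<exists>k\<in>{1..n}. partial_sum X k \<omega> > u)} = pois n * prob (hits_by n)"
proof (cases "n = 0")
  case True
  then show ?thesis by (simp add: hits_by_def)
next
  case False
  let ?B = "Inr ` {1..n} :: (nat + nat) set"
  let ?Q = "\<lambda>f. \<exists>k\<in>{1..n}. (\<Sum>i=1..k. f (Inr i)) > u"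
  have Q: "?Q (V ?B \<omega>) \<longleftrightarrow> (\<exists>k\<in>{1..n}. partial_sum X k \<omega> > u)" for \<omega>
  proof -
    have eq: "(\<Sum>i=1..k. V ?B \<omega> (Inr i)) = partial_sum X k \<omega>" if "k \<le> n" for k
      using sum_block_jumps[of 1 k "{1..n}" \<omega>] that by (simp add: partial_sum_def)
    show ?thesis by (rule bex_cong[OF refl], subst eq, auto)
  qed
  have "prob {\<omega>\<in>space M. counting T 1 \<omega> = n \<and> ?Q (V ?B \<omega>)} = pois n * prob {\<omega>\<in>space M. ?Q (V ?B \<omega>)}"
    using False by (intro prob_counting_and_jumps) measurable
  then show ?thesis unfolding Q hits_by_def .
qed

lemma sums_above: "(\<lambda>n. pois n * prob (above_at n)) sums prob {\<omega>\<in>space M. compound T X 1 \<omega> > u}"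
proof -
  let ?C = "\<lambda>n. {\<omega>\<in>space M. counting T 1 \<omega> = n \<and> partial_sum X n \<omega> > u}"
  have "(\<lambda>n. prob (?C n)) sums prob (\<Union>n. ?C n)"
    by (rule finite_measure_UNION) (auto simp: disjoint_family_on_def)
  moreover have "(\<Union>n. ?C n) = {\<omega>\<in>space M. compound T X 1 \<omega> > u}"
    by (auto simp: compound_def)
  ultimately show ?thesis by (simp add: prob_counting_and_above)
qed

definition hits_in_unit_interval :: "'a set" where
  "hits_in_unit_interval = {\<omega>\<in>space M. \<exists>k\<in>{1..counting T 1 \<omega>}. partial_sum X k \<omega> > u}"

lemma hits_in_unit_interval_split:
  "hits_in_unit_interval = (\<Union>n. {\<omega>\<in>space M. counting T 1 \<omega> = n \<and> (\<exists>k\<in>{1..n}. partial_sum X k \<omega> > u)})"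
  by (auto simp: hits_in_unit_interval_def)

lemma sums_hits: "(\<lambda>n. pois n * prob (hits_by n)) sums prob hits_in_unit_interval"
  unfolding hits_in_unit_interval_split prob_counting_and_hits[symmetric]
  by (rule finite_measure_UNION) (auto simp: disjoint_family_on_def)

text \<open>On a regular path X(t) only takes the values S_0, ..., S_N(1) for t in [0,1],
  so the supremum can exceed u only by a hit of the walk during [0,1].\<close>
lemma sup_le_hits:
  "measure M {\<omega> \<in> space M. \<exists>t\<in>{0..1}. compound T X t \<omega> > u} \<le> prob hits_in_unit_interval"
proof (rule finite_measure_mono_AE)
  show "AE \<omega> in M. \<omega> \<in> {\<omega> \<in> space M. \<exists>t\<in>{0..1}. compound T X t \<omega> > u} \<longrightarrow> \<omega> \<in> hits_in_unit_interval"
    using AE_regular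
  proof eventually_elim
    case (elim \<omega>)
    show ?case
    proof
      assume "\<omega> \<in> {\<omega> \<in> space M. \<exists>t\<in>{0..1}. compound T X t \<omega> > u}"
      then obtain t where t: "t \<in> {0..1}" "partial_sum X (counting T t \<omega>) \<omega> > u" and \<omega>: "\<omega> \<in> space M"
        by (auto simp: compound_def)
      have "{m. 1 \<le> m \<and> arrival T m \<omega> \<le> t} \<subseteq> {m. 1 \<le> m \<and> arrival T m \<omega> \<le> 1}"
        using t(1) by auto
      then have "card {m. 1 \<le> m \<and> arrival T m \<omega> \<le> t} \<le> card {1..counting T 1 \<omega>}"
        unfolding arrivals_in_unit_interval[OF elim] by (rule card_mono[rotated]) simp
      then have "counting T t \<omega> \<le> counting T 1 \<omega>"
        by (simp add: counting_def[of T t])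
      moreover have "counting T t \<omega> \<noteq> 0"
        using t(2) u_pos by (intro notI) simp
      ultimately have "counting T t \<omega> \<in> {1..counting T 1 \<omega>}"
        by simp
      then show "\<omega> \<in> hits_in_unit_interval"
        using \<omega> t(2) unfolding hits_in_unit_interval_def by blast
    qed
  qed
  show "hits_in_unit_interval \<in> sets M"
    unfolding hits_in_unit_interval_split by measurable
qed measurable

definition D :: real where
  "D = exp (- l) * (l * measure M {\<omega> \<in> space M. X 1 \<omega> > u}
           + (\<Sum>m. l ^ (m + 2) / fact (m + 2) *
               measure M {\<omega> \<in> space M. (\<forall>k\<in>{1..m + 1}. partial_sum X k \<omega> \<le> u)
                                        \<and> partial_sum X (m + 2) \<omega> > u}))"

lemma sums_first_passage: "(\<lambda>n. pois n * prob (first_passage n)) sums D"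
proof -
  define g where "g n = pois n * prob (first_passage n)" for n
  define H where "H m = l ^ (m + 2) / fact (m + 2) *
     measure M {\<omega> \<in> space M. (\<forall>k\<in>{1..m + 1}. partial_sum X k \<omega> \<le> u) \<and> partial_sum X (m + 2) \<omega> > u}" for m
  have g_SS: "g (Suc (Suc m)) = exp (- l) * H m" for m
    by (simp add: g_def pois_def H_def first_passage_def)
  have g_1: "g 1 = exp (- l) * (l * measure M {\<omega> \<in> space M. X 1 \<omega> > u})"
    by (simp add: g_def pois_def first_passage_def partial_sum_def)
  have "summable g"
    unfolding g_def by (rule pois_summable_mult) auto
  then have "summable (\<lambda>m. exp l * g (Suc (Suc m)))"
    using summable_Suc_iff[of "\<lambda>n. g (Suc n)"] summable_Suc_iff[of g] by (intro summable_mult) simp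
  then have "summable H"
    by (simp add: g_SS exp_minus)
  then have "(\<lambda>m. g (Suc (Suc m))) sums (exp (- l) * suminf H)"
    unfolding g_SS by (intro sums_mult summable_sums)
  then have "g sums (exp (- l) * suminf H + g 1 + g 0)"
    using sums_Suc_iff[of "\<lambda>n. g (Suc n)"] sums_Suc_iff[of g] by simp
  moreover have "exp (- l) * suminf H + g 1 + g 0 = D"
    using g_1 by (simp add: g_def D_def H_def[abs_def] distrib_left)
  ultimately show ?thesis
    by (simp add: g_def[abs_def])
qed

end

theorem lemma11:
  fixes M :: "'a measure" and T X :: "nat \<Rightarrow> 'a \<Rightarrow> real" and l u :: real
  assumes "prob_space M"
    and l_pos: "0 < l"
    and indep: "prob_space.indep_vars M (\<lambda>_. borel)
                  (\<lambda>i. case i of Inl n \<Rightarrow> T n | Inr n \<Rightarrow> X n) (Inl ` {1..} \<union> Inr ` {1..})"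
    and exp_T: "\<And>n. 1 \<le> n \<Longrightarrow> distributed M lborel (T n) (\<lambda>x. ennreal (exponential_density l x))"
    and X_rv: "\<And>n. 1 \<le> n \<Longrightarrow> X n \<in> borel_measurable M"
    and X_ident: "\<And>n. 1 \<le> n \<Longrightarrow> distr M borel (X n) = distr M borel (X 1)"
    and X_symm: "distr M borel (\<lambda>\<omega>. - X 1 \<omega>) = distr M borel (X 1)"
    and "0 < u"
  shows "measure M {\<omega> \<in> space M. \<exists>t\<in>{0..1}. compound T X t \<omega> > u}
     \<le> 2 * measure M {\<omega> \<in> space M. compound T X 1 \<omega> > u}
       - exp (- l) * (l * measure M {\<omega> \<in> space M. X 1 \<omega> > u}
           + (\<Sum>m. l ^ (m + 2) / fact (m + 2) *
               measure M {\<omega> \<in> space M. (\<forall>k\<in>{1..m + 1}. partial_sum X k \<omega> \<le> u)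
                                        \<and> partial_sum X (m + 2) \<omega> > u}))"
proof -
  interpret compound_poisson M T X l u
    by (intro compound_poisson.intro compound_poisson_axioms.intro assms(1)) (fact assms)+
  have termwise: "pois n * prob (hits_by n)
      \<le> 2 * (pois n * prob (above_at n)) - pois n * prob (first_passage n)" for n
    using mult_left_mono[OF walk_reflection_inequality pois_nonneg] by (simp add: algebra_simps)
  have "(\<lambda>n. 2 * (pois n * prob (above_at n)) - pois n * prob (first_passage n))
          sums (2 * prob {\<omega>\<in>space M. compound T X 1 \<omega> > u} - D)"
    by (intro sums_diff sums_mult sums_above sums_first_passage)
  with termwise sums_hits have "prob hits_in_unit_interval \<le> 2 * prob {\<omega>\<in>space M. compound T X 1 \<omega> > u} - D"
    by (rule sums_le)
  with sup_le_hits show ?thesis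
    unfolding D_def by linarith
qed

end
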